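(* Let $k\le l$ be positive integers with $\gcd(k,l)=1$, let $n\ge1$ and $q\ge 0$ be integers, and let $m=qn$ (i.e. the remainder of $m$ modulo $n$ is $r=0$). Then $L^{k,l}(m,n)=nkq$, and this value is attained at the $nk\times nl$ matrix all of whose entries equal $q$.
   Context: $\mathcal D^{k,l}(m,n)$ denotes the set of all $nk\times nl$ matrices with nonnegative integer entries all of whose row sums equal $ml$ and all of whose column sums equal $mk$. For an $s\times t$ matrix $A=(a_{ij})$ with $s\le t$, a transversal of $A$ is a set of entries $T=\{a_{1i_1},\dots,a_{si_s}\}$ with $i_1,\dots,i_s\in\{1,\dots,t\}$ pairwise distinct, and $|T|=a_{1i_1}+\cdots+a_{si_s}$; if $s>t$, the transversals of $A$ are those of its transpose. The tropical determinant is ${\rm tdet}(A)=\max_T|T|$, and $L^{k,l}(m,n)=\min_{A\in\mathcal D^{k,l}(m,n)}{\rm tdet}(A)$. *)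

theory Defs
  imports Main "HOL-Library.FuncSet"
begin

text \<open>An s x t matrix with nonnegative integer entries is a function
  A :: nat => nat => nat, of which only the entries A i j with i < s, j < t matter
  (rows and columns indexed from 0).\<close>

definition Dmat :: "nat \<Rightarrow> nat \<Rightarrow> nat \<Rightarrow> nat \<Rightarrow> (nat \<Rightarrow> nat \<Rightarrow> nat) set" where
  "Dmat k l m n = {A. (\<forall>i<n*k. (\<Sum>j<n*l. A i j) = m*l) \<and> (\<forall>j<n*l. (\<Sum>i<n*k. A i j) = m*k)}"

definition transversal_weights :: "nat \<Rightarrow> nat \<Rightarrow> (nat \<Rightarrow> nat \<Rightarrow> nat) \<Rightarrow> nat set" where
  "transversal_weights s t A =
     (if s \<le> t then {(\<Sum>i<s. A i (\<sigma> i)) | \<sigma>. \<sigma> \<in> {..<s} \<rightarrow>\<^sub>E {..<t} \<and> inj_on \<sigma> {..<s}}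
      else {(\<Sum>j<t. A (\<sigma> j) j) | \<sigma>. \<sigma> \<in> {..<t} \<rightarrow>\<^sub>E {..<s} \<and> inj_on \<sigma> {..<t}})"

definition tdet :: "nat \<Rightarrow> nat \<Rightarrow> (nat \<Rightarrow> nat \<Rightarrow> nat) \<Rightarrow> nat" where
  "tdet s t A = Max (transversal_weights s t A)"

definition Lval :: "nat \<Rightarrow> nat \<Rightarrow> nat \<Rightarrow> nat \<Rightarrow> nat" where
  "Lval k l m n = Inf {tdet (n*k) (n*l) A | A. A \<in> Dmat k l m n}"

end

theory Submission
  imports Defs
begin

text \<open>The t cyclic transversals \<open>i \<mapsto> (i + c) mod t\<close> of an s \<times> t matrix (s \<le> t) together
  meet every entry of the matrix exactly once, and each of them weighs at most the tropical
  determinant.  So if all row sums equal R, then \<open>s * R \<le> t * tdet\<close>; for a matrix in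
  \<open>Dmat k l (q*n) n\<close> this reads \<open>n*k*q \<le> tdet\<close>, and the constant matrix q attains it.\<close>

lemma inj_on_add_mod: "inj_on (\<lambda>x. (c + x) mod t) {..<(t::nat)}"
proof (rule linorder_inj_onI)
  fix x y assume "x < y" "y \<in> {..<t}"
  then have "\<not> t dvd (c + y) - (c + x)"
    by (auto dest: dvd_imp_le)
  then show "(c + x) mod t \<noteq> (c + y) mod t"
    using mod_eq_dvd_iff_nat[of "c + x" "c + y" t] \<open>x < y\<close> by simp
qed auto

lemma bij_betw_add_mod: "bij_betw (\<lambda>x. (c + x) mod t) {..<t} {..<(t::nat)}"
proof (cases "t = 0")
  case False
  then have "(\<lambda>x. (c + x) mod t) ` {..<t} \<subseteq> {..<t}" by auto
  then show ?thesis
    using inj_on_add_mod by (simp add: bij_betw_def endo_inj_surj)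
qed simp

lemma sum_add_mod: "(\<Sum>x<t. f ((c + x) mod t)) = (\<Sum>j<(t::nat). f j)"
  using sum.reindex_bij_betw[OF bij_betw_add_mod] .

lemma finite_transversal_weights: "finite (transversal_weights s t A)"
  unfolding transversal_weights_def
  by (auto simp: finite_PiE setcompr_eq_image)

lemma tdet_ge: "x \<in> transversal_weights s t A \<Longrightarrow> x \<le> tdet s t A"
  unfolding tdet_def by (rule Max_ge[OF finite_transversal_weights])

lemma cyclic_transversal_weight:
  assumes "s \<le> t"
  shows "(\<Sum>i<s. A i ((i + c) mod t)) \<in> transversal_weights s t A"
proof -
  define \<sigma> where "\<sigma> = restrict (\<lambda>i. (c + i) mod t) {..<s}"
  have "\<sigma> \<in> {..<s} \<rightarrow>\<^sub>E {..<t}"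
    using assms by (auto simp: \<sigma>_def)
  moreover have "inj_on \<sigma> {..<s}"
    using inj_on_subset[OF inj_on_add_mod, of "{..<s}"] assms by (auto simp: \<sigma>_def inj_on_def)
  moreover have "(\<Sum>i<s. A i ((i + c) mod t)) = (\<Sum>i<s. A i (\<sigma> i))"
    by (simp add: \<sigma>_def add.commute)
  ultimately show ?thesis
    using assms unfolding transversal_weights_def by auto
qed

lemma row_sums_le_tdet:
  assumes "s \<le> t" and rows: "\<And>i. i < s \<Longrightarrow> (\<Sum>j<t. A i j) = R"
  shows "s * R \<le> t * tdet s t A"
proof -
  have "s * R = (\<Sum>i<s. \<Sum>c<t. A i ((i + c) mod t))"
    by (simp add: rows sum_add_mod)
  also have "\<dots> = (\<Sum>c<t. \<Sum>i<s. A i ((i + c) mod t))"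
    by (rule sum.swap)
  also have "\<dots> \<le> (\<Sum>c<t. tdet s t A)"
    by (intro sum_mono tdet_ge cyclic_transversal_weight assms(1))
  finally show ?thesis by simp
qed

lemma tdet_ge_Dmat:
  assumes "k \<le> l" and "A \<in> Dmat k l (q * n) n"
  shows "n * k * q \<le> tdet (n * k) (n * l) A"
proof (cases "n * l = 0")
  case False
  have "n * k * (q * n * l) \<le> n * l * tdet (n * k) (n * l) A"
    using assms by (intro row_sums_le_tdet) (auto simp: Dmat_def)
  then have "n * l * (n * k * q) \<le> n * l * tdet (n * k) (n * l) A"
    by (simp add: ac_simps)
  with False show ?thesis by simp
qed (use assms in auto)

lemma transversal_weights_const: "transversal_weights s t (\<lambda>_ _. q) = {min s t * q}"
  unfolding transversal_weights_def
  by (auto intro!: exI[of _ "restrict id {..<min s t}"] simp: inj_on_def min_def split: if_splits)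

lemma tdet_const: "tdet s t (\<lambda>_ _. q) = min s t * q"
  by (simp add: tdet_def transversal_weights_const)

theorem corollary4p1:
  fixes k l n q m :: nat
  assumes "0 < k" and "k \<le> l" and "coprime k l" and "1 \<le> n" and "m = q * n"
  shows "Lval k l m n = n * k * q
         \<and> (\<lambda>i j. q) \<in> Dmat k l m n
         \<and> tdet (n*k) (n*l) (\<lambda>i j. q) = n * k * q"
proof -
  have const_Dmat: "(\<lambda>i j. q) \<in> Dmat k l m n"
    using assms by (simp add: Dmat_def)
  have const_tdet: "tdet (n*k) (n*l) (\<lambda>i j. q) = n * k * q"
    using assms by (simp add: tdet_const)
  have "Lval k l m n = n * k * q"
    unfolding Lval_def
  proof (rule cInf_eq_minimum)
    show "n * k * q \<in> {tdet (n*k) (n*l) A |A. A \<in> Dmat k l m n}"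
      using const_Dmat const_tdet by force
  qed (use tdet_ge_Dmat assms in auto)
  with const_Dmat const_tdet show ?thesis by simp
qed

end
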